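(* Let $a,b,c,d$ be admissible TDL parameters. (i) Let $V$ be a Gamma random variable with Laplace transform $E[e^{-tV}]=(1+bdt)^{-1/d}$, and let $X$ be a random variable whose conditional law given $V$ is $\mathrm{TDS}(a,V,c)$. Then $X\sim\mathrm{TDL}(a,b,c,d)$. (ii) If moreover $c\in(0,1]$, let $W$ be Gamma with Laplace transform $(1+bdc^a t)^{-1/d}$, let $Y$ have conditional law $\mathrm{TPS}(a,W,1/c-1)$ given $W$, and let $X'$ have conditional law Poisson with mean $Y$ given $(W,Y)$. Then $X'\sim\mathrm{TDL}(a,b,c,d)$.
   Context: $\operatorname{sgn}$ is the sign function with $\operatorname{sgn}(0)=0$. $\mathrm{TDS}(a,b,c)$: law on $\mathbb{N}$ with pgf $\exp(\operatorname{sgn}(a)b((1-c)^a-(1-cs)^a))$, $s\in[0,1]$ (the formula defines the law for any $b>0$ and admissible $a,c$). $\mathrm{TDL}(a,b,c,d)$: law on $\mathbb{N}$ with pgf $\big(1+\operatorname{sgn}(a)\,b\,d\,((1-cs)^a-(1-c)^a)\big)^{-1/d}$, $s\in[0,1]$; admissible parameters: $d>0$, $b>0$, and either $a\le0$, $c\in[0,1)$, or $a\in(0,1]$, $c\in[0,1]$. $\mathrm{TPS}(\gamma,\lambda,\theta)$ (Tweedie / tempered positive stable law): the law on $[0,\infty)$ with Laplace transform $\exp\big(\operatorname{sgn}(\gamma)\lambda(\theta^\gamma-(\theta+t)^\gamma)\big)$, $\mathrm{Re}(t)>0$, for $\lambda>0$ and either $\gamma\le1$, $\theta>0$, or $\gamma\in(0,1]$,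 $\theta=0$. Poisson with mean $0$ is the point mass at $0$. *)

theory Defs
  imports "HOL-Probability.Probability"
begin

definition pgf :: "nat measure \<Rightarrow> real \<Rightarrow> real" where
  "pgf N s = (\<integral>n. s ^ n \<partial>N)"

definition TDL_admissible :: "real \<Rightarrow> real \<Rightarrow> real \<Rightarrow> real \<Rightarrow> bool" where
  "TDL_admissible a b c d \<longleftrightarrow> d > 0 \<and> b > 0 \<and>
     ((a \<le> 0 \<and> 0 \<le> c \<and> c < 1) \<or> (0 < a \<and> a \<le> 1 \<and> 0 \<le> c \<and> c \<le> 1))"

definition TDS_law :: "real \<Rightarrow> real \<Rightarrow> real \<Rightarrow> nat measure \<Rightarrow> bool" where
  "TDS_law a b c N \<longleftrightarrow> prob_space N \<and> sets N = sets (count_space UNIV) \<and>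
     (\<forall>s\<in>{0..1}. pgf N s = exp (sgn a * b * ((1 - c) powr a - (1 - c * s) powr a)))"

definition TDL_law :: "real \<Rightarrow> real \<Rightarrow> real \<Rightarrow> real \<Rightarrow> nat measure \<Rightarrow> bool" where
  "TDL_law a b c d N \<longleftrightarrow> prob_space N \<and> sets N = sets (count_space UNIV) \<and>
     (\<forall>s\<in>{0..1}. pgf N s =
        (1 + sgn a * b * d * ((1 - c * s) powr a - (1 - c) powr a)) powr (- 1 / d))"

definition TPS_law :: "real \<Rightarrow> real \<Rightarrow> real \<Rightarrow> real measure \<Rightarrow> bool" where
  "TPS_law \<gamma> lam \<theta> P \<longleftrightarrow> prob_space P \<and> sets P = sets borel \<and> emeasure P {..<0} = 0 \<and>
     (\<forall>t::complex. Re t > 0 \<longrightarrow>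
        (\<integral>x. exp (- t * complex_of_real x) \<partial>P) =
        exp (complex_of_real (sgn \<gamma> * lam) *
             (complex_of_real \<theta> powr complex_of_real \<gamma>
              - (complex_of_real \<theta> + t) powr complex_of_real \<gamma>)))"

text \<open>Poisson law with mean mu >= 0 (mean 0 gives the point mass at 0, as 0^0 = 1).\<close>
definition poisson_law :: "real \<Rightarrow> nat measure" where
  "poisson_law \<mu> = density (count_space UNIV) (\<lambda>n. ennreal (exp (- \<mu>) * \<mu> ^ n / fact n))"

definition cond_law ::
  "'a measure \<Rightarrow> ('a \<Rightarrow> 'b) \<Rightarrow> 'b measure \<Rightarrow> ('a \<Rightarrow> 'c) \<Rightarrow> 'c measure \<Rightarrow> ('b \<Rightarrow> 'c measure) \<Rightarrow> bool"
  where
  "cond_law M V MV X MX K \<longleftrightarrow> K \<in> measurable MV (prob_algebra MX) \<and>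
     (\<forall>A\<in>sets MV. \<forall>C\<in>sets MX.
        measure M {\<omega>\<in>space M. V \<omega> \<in> A \<and> X \<omega> \<in> C} =
        (\<integral>\<omega>. indicator A (V \<omega>) * measure (K (V \<omega>)) C \<partial>M))"

end

theory Submission
  imports Defs "HOL-Real_Asymp.Real_Asymp"
begin

text \<open>Both parts are Laplace-transform computations. Given the mixing variable \<open>V\<close>, the TDS pgf at
  \<open>s\<close> is \<open>exp (- \<tau> V)\<close> with \<open>\<tau> = sgn a ((1 - c s) powr a - (1 - c) powr a) \<ge> 0\<close>, so averaging over
  \<open>V\<close> gives the gamma Laplace transform \<open>(1 + b d \<tau>) powr (-1/d)\<close>, which is the TDL pgf. In (ii) the
  Poisson pgf given \<open>Y\<close> is \<open>exp (- (1 - s) Y)\<close>; the TPS Laplace transform with \<open>\<theta> = 1/c - 1\<close> turns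
  this into \<open>exp (- \<tau> W / c powr a)\<close>, and the factor \<open>c powr a\<close> in the Laplace transform of \<open>W\<close>
  cancels.\<close>

lemma cond_law_kernel_measurable:
  assumes V: "V \<in> measurable M MV" and cl: "cond_law M V MV X MX K"
  shows "(\<lambda>\<omega>. K (V \<omega>)) \<in> measurable M (subprob_algebra MX)"
    and "\<And>\<omega>. \<omega> \<in> space M \<Longrightarrow> prob_space (K (V \<omega>)) \<and> sets (K (V \<omega>)) = sets MX"
proof -
  have K: "K \<in> measurable MV (prob_algebra MX)" using cl by (simp add: cond_law_def)
  show "(\<lambda>\<omega>. K (V \<omega>)) \<in> measurable M (subprob_algebra MX)"
    using measurable_compose[OF V measurable_prob_algebraD[OF K]] .
  show "\<And>\<omega>. \<omega> \<in> space M \<Longrightarrow> prob_space (K (V \<omega>)) \<and> sets (K (V \<omega>)) = sets MX"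
    using measurable_space[OF K] measurable_space[OF V] by (auto simp: space_prob_algebra)
qed

lemma cond_law_distr_eq_bind:
  assumes M: "prob_space M" and V: "V \<in> measurable M MV" and X: "X \<in> measurable M MX"
    and cl: "cond_law M V MV X MX K"
  shows "distr M MX X = M \<bind> (\<lambda>\<omega>. K (V \<omega>))"
proof (rule measure_eqI)
  note KV = cond_law_kernel_measurable[OF V cl]
  have ne: "space M \<noteq> {}" using M prob_space.not_empty by blast
  show "sets (distr M MX X) = sets (M \<bind> (\<lambda>\<omega>. K (V \<omega>)))"
    using sets_bind[OF _ ne, of "\<lambda>\<omega>. K (V \<omega>)" MX] KV(2) by simp
  fix C assume "C \<in> sets (distr M MX X)"
  hence C: "C \<in> sets MX" by simp
  have KC: "(\<lambda>\<omega>. measure (K (V \<omega>)) C) \<in> borel_measurable M"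
    using measurable_compose[OF KV(1) measurable_measure_subprob_algebra[OF C]] by simp
  have "X -` C \<inter> space M = {\<omega>\<in>space M. V \<omega> \<in> space MV \<and> X \<omega> \<in> C}"
    using measurable_space[OF V] by auto
  hence "emeasure (distr M MX X) C = measure M {\<omega>\<in>space M. V \<omega> \<in> space MV \<and> X \<omega> \<in> C}"
    using M by (simp add: emeasure_distr[OF X C] prob_space_def finite_measure.emeasure_eq_measure)
  also have "\<dots> = (\<integral>\<omega>. measure (K (V \<omega>)) C \<partial>M)"
    using cl C measurable_space[OF V] by (simp add: cond_law_def cong: Bochner_Integration.integral_cong)
  also have "\<dots> = (\<integral>\<^sup>+\<omega>. emeasure (K (V \<omega>)) C \<partial>M)"
  proof -
    have "integrable M (\<lambda>\<omega>. measure (K (V \<omega>)) C)"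
      using KV(2) KC M by (intro finite_measure.integrable_const_bound[where B = 1])
        (auto simp: prob_space_def prob_space.prob_le_1)
    thus ?thesis
      using KV(2) by (subst nn_integral_eq_integral[symmetric])
        (auto intro!: nn_integral_cong simp: prob_space_def finite_measure.emeasure_eq_measure)
  qed
  also have "\<dots> = emeasure (M \<bind> (\<lambda>\<omega>. K (V \<omega>))) C"
    by (rule emeasure_bind[OF ne KV(1) C, symmetric])
  finally show "emeasure (distr M MX X) C = emeasure (M \<bind> (\<lambda>\<omega>. K (V \<omega>))) C" .
qed

lemma nn_integral_cond_law:
  assumes M: "prob_space M" and V: "V \<in> measurable M MV" and X: "X \<in> measurable M MX"
    and cl: "cond_law M V MV X MX K" and f: "f \<in> borel_measurable MX"
  shows "(\<integral>\<^sup>+\<omega>. f (X \<omega>) \<partial>M) = (\<integral>\<^sup>+\<omega>. (\<integral>\<^sup>+x. f x \<partial>K (V \<omega>)) \<partial>M)"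
proof -
  have "(\<integral>\<^sup>+\<omega>. f (X \<omega>) \<partial>M) = (\<integral>\<^sup>+x. f x \<partial>distr M MX X)"
    using f by (simp add: nn_integral_distr[OF X])
  also have "\<dots> = (\<integral>\<^sup>+\<omega>. (\<integral>\<^sup>+x. f x \<partial>K (V \<omega>)) \<partial>M)"
    unfolding cond_law_distr_eq_bind[OF M V X cl]
    by (rule nn_integral_bind[OF f cond_law_kernel_measurable(1)[OF V cl]])
  finally show ?thesis .
qed

lemma AE_cond_law_not_in:
  assumes M: "prob_space M" and V: "V \<in> measurable M MV" and X: "X \<in> measurable M MX"
    and cl: "cond_law M V MV X MX K" and C: "C \<in> sets MX"
    and null: "AE \<omega> in M. emeasure (K (V \<omega>)) C = 0"
  shows "AE \<omega> in M. X \<omega> \<notin> C"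
proof -
  have ne: "space M \<noteq> {}" using M prob_space.not_empty by blast
  have "emeasure M (X -` C \<inter> space M) = emeasure (M \<bind> (\<lambda>\<omega>. K (V \<omega>))) C"
    using C by (simp add: emeasure_distr[OF X C, symmetric] cond_law_distr_eq_bind[OF M V X cl])
  also have "\<dots> = (\<integral>\<^sup>+\<omega>. emeasure (K (V \<omega>)) C \<partial>M)"
    by (rule emeasure_bind[OF ne cond_law_kernel_measurable(1)[OF V cl] C])
  also have "\<dots> = 0"
    using null by (simp cong: nn_integral_cong_AE)
  finally show ?thesis
    using X C by (subst AE_iff_measurable[of "X -` C \<inter> space M"]) auto
qed

lemma nn_integral_eq_integral_of_nonzero:
  fixes f :: "'a \<Rightarrow> real"
  assumes "integral\<^sup>L M f \<noteq> 0" and "AE x in M. 0 \<le> f x"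
  shows "(\<integral>\<^sup>+x. ennreal (f x) \<partial>M) = ennreal (integral\<^sup>L M f)"
  using assms not_integrable_integral_eq by (metis nn_integral_eq_integral)

lemma
  fixes V :: "'a \<Rightarrow> real"
  assumes M: "prob_space M" and V: "V \<in> borel_measurable M" and k: "k > 0" and d: "d > 0"
    and laplace: "\<forall>t\<ge>0. (\<integral>\<omega>. exp (- t * V \<omega>) \<partial>M) = (1 + k * t) powr (- 1 / d)"
  shows nn_integral_exp_gamma_laplace:
      "t \<ge> 0 \<Longrightarrow> (\<integral>\<^sup>+\<omega>. ennreal (exp (- t * V \<omega>)) \<partial>M) = ennreal ((1 + k * t) powr (- 1 / d))"
    and AE_pos_gamma_laplace: "AE \<omega> in M. V \<omega> > 0"
proof -
  have integrable: "integrable M (\<lambda>\<omega>. exp (- t * V \<omega>))" if t: "t \<ge> 0" for t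
  proof (rule ccontr)
    have "1 + k * t > 0" using k t by (simp add: add_pos_nonneg)
    moreover assume "\<not> integrable M (\<lambda>\<omega>. exp (- t * V \<omega>))"
    ultimately show False using laplace t not_integrable_integral_eq by fastforce
  qed
  show "t \<ge> 0 \<Longrightarrow> (\<integral>\<^sup>+\<omega>. ennreal (exp (- t * V \<omega>)) \<partial>M) = ennreal ((1 + k * t) powr (- 1 / d))"
    using laplace integrable by (subst nn_integral_eq_integral) auto
  interpret prob_space M by (rule M)
  define S where "S = {\<omega>\<in>space M. V \<omega> \<le> 0}"
  have S: "S \<in> sets M" unfolding S_def using V by measurable
  have bound: "measure M S \<le> (1 + k * t) powr (- 1 / d)" if t: "t \<ge> 0" for t
  proof -
    have "measure M S = (\<integral>\<omega>. indicator S \<omega> \<partial>M)" using S by simp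
    also have "\<dots> \<le> (\<integral>\<omega>. exp (- t * V \<omega>) \<partial>M)"
    proof (rule integral_mono[OF _ integrable[OF t]])
      show "integrable M (indicator S :: 'a \<Rightarrow> real)"
        using S by (simp add: integrable_indicator_iff less_top[symmetric])
      show "indicator S \<omega> \<le> exp (- t * V \<omega>)" for \<omega>
        using t by (auto simp: S_def indicator_def mult_nonneg_nonpos)
    qed
    finally show ?thesis using laplace t by simp
  qed
  have "eventually (\<lambda>t. measure M S \<le> (1 + k * t) powr (- 1 / d)) at_top"
    using eventually_ge_at_top[of "0::real"] by eventually_elim (rule bound)
  moreover have "((\<lambda>t. (1 + k * t) powr (- 1 / d)) \<longlongrightarrow> 0) at_top"
    using k d by real_asymp
  ultimately have "measure M S \<le> 0"
    using trivial_limit_at_top_linorder by (intro tendsto_lowerbound) auto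
  hence "emeasure M S = 0" by (simp add: emeasure_eq_measure measure_nonneg antisym)
  thus "AE \<omega> in M. V \<omega> > 0"
    by (subst AE_iff_measurable[OF S]) (auto simp: S_def)
qed

lemma pgf_nonneg: "s \<in> {0..1::real} \<Longrightarrow> pgf N s \<ge> 0"
  unfolding pgf_def by (simp add: integral_nonneg)

lemma nn_integral_pgf:
  assumes "prob_space N" "sets N = sets (count_space UNIV)" and s: "s \<in> {0..1::real}"
  shows "(\<integral>\<^sup>+n. ennreal (s ^ n) \<partial>N) = ennreal (pgf N s)"
proof -
  have "(\<lambda>n. s ^ n) \<in> borel_measurable N"
    by (subst measurable_cong_sets[OF assms(2) refl]) simp
  hence "integrable N (\<lambda>n. s ^ n)"
    using assms finite_measure.integrable_const_bound[of N "\<lambda>n. s ^ n" 1]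
    by (simp add: prob_space_def power_le_one)
  thus ?thesis unfolding pgf_def using s by (intro nn_integral_eq_integral) auto
qed

lemma pgf_distr_cond_law:
  assumes M: "prob_space M" and V: "V \<in> measurable M MV" and X: "X \<in> measurable M (count_space UNIV)"
    and cl: "cond_law M V MV X (count_space UNIV) K" and s: "s \<in> {0..1::real}"
  shows "ennreal (pgf (distr M (count_space UNIV) X) s) =
    (\<integral>\<^sup>+\<omega>. (\<integral>\<^sup>+n. ennreal (s ^ n) \<partial>K (V \<omega>)) \<partial>M)"
proof -
  have "ennreal (pgf (distr M (count_space UNIV) X) s) =
      (\<integral>\<^sup>+n. ennreal (s ^ n) \<partial>distr M (count_space UNIV) X)"
    using M X s by (intro nn_integral_pgf[symmetric] prob_space.prob_space_distr) auto
  also have "\<dots> = (\<integral>\<^sup>+\<omega>. ennreal (s ^ X \<omega>) \<partial>M)"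
    by (simp add: nn_integral_distr[OF X])
  also have "\<dots> = (\<integral>\<^sup>+\<omega>. (\<integral>\<^sup>+n. ennreal (s ^ n) \<partial>K (V \<omega>)) \<partial>M)"
    by (rule nn_integral_cond_law[OF M V X cl]) simp
  finally show ?thesis .
qed

lemma nn_integral_pgf_poisson_law:
  assumes y: "y \<ge> 0" and s: "s \<in> {0..1::real}"
  shows "(\<integral>\<^sup>+n. ennreal (s ^ n) \<partial>poisson_law y) = ennreal (exp (- (1 - s) * y))"
proof -
  have "(\<integral>\<^sup>+n. ennreal (s ^ n) \<partial>poisson_law y)
      = (\<integral>\<^sup>+n. ennreal (exp (- y) * y ^ n / fact n) * ennreal (s ^ n) \<partial>count_space UNIV)"
    unfolding poisson_law_def by (subst nn_integral_density) auto
  also have "\<dots> = (\<Sum>n. ennreal (exp (- y) * ((y * s) ^ n / fact n)))"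
    using y s by (subst nn_integral_count_space_nat)
      (simp add: ennreal_mult'[symmetric] power_mult_distrib mult.assoc)
  also have "\<dots> = ennreal (exp (- y) * exp (y * s))"
    using y s sums_mult[OF exp_converges[of "y * s"], of "exp (- y)"]
    by (intro suminf_ennreal_eq) (auto simp: divide_inverse mult.commute)
  also have "exp (- y) * exp (y * s) = exp (- (1 - s) * y)"
    by (simp add: exp_add[symmetric] algebra_simps)
  finally show ?thesis .
qed

lemma nn_integral_exp_TPS_law:
  assumes P: "TPS_law \<gamma> w \<theta> P" and \<theta>: "\<theta> \<ge> 0" and t: "t > 0"
  shows "(\<integral>\<^sup>+x. ennreal (exp (- t * x)) \<partial>P) =
    ennreal (exp (sgn \<gamma> * w * (\<theta> powr \<gamma> - (\<theta> + t) powr \<gamma>)))"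
proof -
  have "complex_of_real (\<integral>x. exp (- t * x) \<partial>P) =
      (\<integral>x. exp (- complex_of_real t * complex_of_real x) \<partial>P)"
    unfolding integral_complex_of_real[symmetric] by (simp add: exp_of_real[symmetric])
  also have "\<dots> = exp (complex_of_real (sgn \<gamma> * w) *
      (complex_of_real \<theta> powr complex_of_real \<gamma> - (complex_of_real \<theta> + complex_of_real t) powr complex_of_real \<gamma>))"
    using P t unfolding TPS_law_def by auto
  also have "\<dots> = complex_of_real (exp (sgn \<gamma> * w * (\<theta> powr \<gamma> - (\<theta> + t) powr \<gamma>)))"
    using \<theta> t by (simp add: powr_of_real exp_of_real[symmetric] of_real_add[symmetric] del: of_real_add)
  finally have "(\<integral>x. exp (- t * x) \<partial>P) = exp (sgn \<gamma> * w * (\<theta> powr \<gamma> - (\<theta> + t) powr \<gamma>))"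
    by (simp only: of_real_eq_iff)
  thus ?thesis by (subst nn_integral_eq_integral_of_nonzero) auto
qed

lemma TDL_exponent_nonneg:
  assumes adm: "TDL_admissible a b c d" and s: "s \<in> {0..1::real}"
  shows "sgn a * ((1 - c * s) powr a - (1 - c) powr a) \<ge> 0"
proof -
  have cs: "c * s \<le> c" "0 \<le> c" using adm s unfolding TDL_admissible_def
    by (auto simp: mult_left_le)
  consider "a > 0" "c \<le> 1" | "a < 0" "c < 1" | "a = 0" using adm unfolding TDL_admissible_def
    by (cases "a > 0"; cases "a < 0") auto
  thus ?thesis
  proof cases
    case 1
    hence "(1 - c) powr a \<le> (1 - c * s) powr a" using cs by (intro powr_mono2) auto
    thus ?thesis using 1 by simp
  next
    case 2
    hence "(1 - c * s) powr a \<le> (1 - c) powr a" using cs by (intro powr_mono2') auto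
    thus ?thesis using 2 by (simp add: mult_nonpos_nonpos)
  qed simp
qed

lemma TPS_exponent_eq_TDL_exponent:
  assumes c: "0 < c" "c \<le> 1" and s: "s \<in> {0..1::real}"
  shows "sgn a * ((1 / c - 1 + (1 - s)) powr a - (1 / c - 1) powr a) =
    sgn a * ((1 - c * s) powr a - (1 - c) powr a) / c powr a"
proof -
  have "c * s \<le> 1" using c s by (auto intro: mult_le_one)
  hence "(1 / c - 1 + (1 - s)) powr a = (1 - c * s) powr a / c powr a"
    using c by (subst powr_divide[symmetric]) (auto simp: field_simps)
  moreover have "(1 / c - 1) powr a = (1 - c) powr a / c powr a"
    using c by (subst powr_divide[symmetric]) (auto simp: field_simps)
  ultimately show ?thesis by (simp add: diff_divide_distrib[symmetric])
qed

lemma TDL_law_gamma_mixture_TDS: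
  assumes adm: "TDL_admissible a b c d" and M: "prob_space M" and V: "V \<in> borel_measurable M"
    and X: "X \<in> measurable M (count_space UNIV)"
    and laplace: "\<forall>t\<ge>0. (\<integral>\<omega>. exp (- t * V \<omega>) \<partial>M) = (1 + b * d * t) powr (- 1 / d)"
    and TDS: "\<forall>v>0. TDS_law a v c (K v)" and cl: "cond_law M V borel X (count_space UNIV) K"
  shows "TDL_law a b c d (distr M (count_space UNIV) X)"
  unfolding TDL_law_def
proof (intro conjI ballI)
  show "prob_space (distr M (count_space UNIV) X)" using M X by (simp add: prob_space.prob_space_distr)
  show "sets (distr M (count_space UNIV) X) = sets (count_space UNIV)" by simp
  fix s :: real assume s: "s \<in> {0..1}"
  have d: "d > 0" and bd: "b * d > 0" using adm by (auto simp: TDL_admissible_def)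
  define \<tau> where "\<tau> = sgn a * ((1 - c * s) powr a - (1 - c) powr a)"
  have "ennreal (pgf (distr M (count_space UNIV) X) s) =
      (\<integral>\<^sup>+\<omega>. (\<integral>\<^sup>+n. ennreal (s ^ n) \<partial>K (V \<omega>)) \<partial>M)"
    by (rule pgf_distr_cond_law[OF M V X cl s])
  also have "\<dots> = (\<integral>\<^sup>+\<omega>. ennreal (exp (- \<tau> * V \<omega>)) \<partial>M)"
    using AE_pos_gamma_laplace[OF M V bd d laplace]
  proof (intro nn_integral_cong_AE, eventually_elim)
    case (elim \<omega>)
    hence "TDS_law a (V \<omega>) c (K (V \<omega>))" using TDS by simp
    thus ?case using s by (simp add: TDS_law_def nn_integral_pgf \<tau>_def algebra_simps)
  qed
  also have "\<dots> = ennreal ((1 + b * d * \<tau>) powr (- 1 / d))"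
    using TDL_exponent_nonneg[OF adm s]
    by (intro nn_integral_exp_gamma_laplace[OF M V bd d laplace]) (simp add: \<tau>_def)
  finally show "pgf (distr M (count_space UNIV) X) s =
      (1 + sgn a * b * d * ((1 - c * s) powr a - (1 - c) powr a)) powr (- 1 / d)"
    using pgf_nonneg[OF s] by (simp add: \<tau>_def algebra_simps)
qed

lemma TDL_law_gamma_mixture_TPS_Poisson:
  assumes adm: "TDL_admissible a b c d" and c: "0 < c" and M: "prob_space M"
    and W: "W \<in> borel_measurable M" and Y: "Y \<in> borel_measurable M"
    and X: "X \<in> measurable M (count_space UNIV)"
    and laplace: "\<forall>t\<ge>0. (\<integral>\<omega>. exp (- t * W \<omega>) \<partial>M) = (1 + b * d * c powr a * t) powr (- 1 / d)"
    and TPS: "\<forall>w>0. TPS_law a w (1 / c - 1) (K1 w)" and clY: "cond_law M W borel Y borel K1"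
    and poisson: "\<forall>w y. y \<ge> 0 \<longrightarrow> K2 (w, y) = poisson_law y"
    and clX: "cond_law M (\<lambda>\<omega>. (W \<omega>, Y \<omega>)) (borel \<Otimes>\<^sub>M borel) X (count_space UNIV) K2"
  shows "TDL_law a b c d (distr M (count_space UNIV) X)"
  unfolding TDL_law_def
proof (intro conjI ballI)
  show "prob_space (distr M (count_space UNIV) X)" using M X by (simp add: prob_space.prob_space_distr)
  show "sets (distr M (count_space UNIV) X) = sets (count_space UNIV)" by simp
  fix s :: real assume s: "s \<in> {0..1}"
  have d: "d > 0" and c1: "c \<le> 1" and bdc: "b * d * c powr a > 0"
    using adm c by (auto simp: TDL_admissible_def)
  have W_pos: "AE \<omega> in M. W \<omega> > 0" by (rule AE_pos_gamma_laplace[OF M W bdc d laplace])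
  have "AE \<omega> in M. Y \<omega> \<notin> {..<0}"
    using W_pos TPS by (intro AE_cond_law_not_in[OF M W Y clY]) (auto simp: TPS_law_def)
  hence Y_nonneg: "AE \<omega> in M. Y \<omega> \<ge> 0" by (simp add: not_less)
  show "pgf (distr M (count_space UNIV) X) s =
      (1 + sgn a * b * d * ((1 - c * s) powr a - (1 - c) powr a)) powr (- 1 / d)"
  proof (cases "s = 1")
    \<comment> \<open>The TPS Laplace transform is only known for \<open>t > 0\<close>, i.e. for \<open>s < 1\<close>.\<close>
    case True
    interpret prob_space "distr M (count_space UNIV) X" using M X by (simp add: prob_space.prob_space_distr)
    show ?thesis using True prob_space by (simp add: pgf_def)
  next
    case False
    with s have t: "1 - s > 0" by simp
    define \<tau> where "\<tau> = sgn a * ((1 - c * s) powr a - (1 - c) powr a) / c powr a"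
    have "ennreal (pgf (distr M (count_space UNIV) X) s) =
        (\<integral>\<^sup>+\<omega>. (\<integral>\<^sup>+n. ennreal (s ^ n) \<partial>K2 (W \<omega>, Y \<omega>)) \<partial>M)"
      by (rule pgf_distr_cond_law[OF M measurable_Pair[OF W Y] X clX s])
    also have "\<dots> = (\<integral>\<^sup>+\<omega>. ennreal (exp (- (1 - s) * Y \<omega>)) \<partial>M)"
      using Y_nonneg by (intro nn_integral_cong_AE)
        (auto elim!: eventually_mono simp: poisson nn_integral_pgf_poisson_law[OF _ s])
    also have "\<dots> = (\<integral>\<^sup>+\<omega>. (\<integral>\<^sup>+y. ennreal (exp (- (1 - s) * y)) \<partial>K1 (W \<omega>)) \<partial>M)"
      by (rule nn_integral_cond_law[OF M W Y clY]) simp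
    also have "\<dots> = (\<integral>\<^sup>+\<omega>. ennreal (exp (- \<tau> * W \<omega>)) \<partial>M)"
      using W_pos
    proof (intro nn_integral_cong_AE, eventually_elim)
      case (elim \<omega>)
      have "1 / c - 1 \<ge> 0" using c c1 by simp
      thus ?case
        using TPS elim t TPS_exponent_eq_TDL_exponent[OF c c1 s, of a]
        by (subst nn_integral_exp_TPS_law) (auto simp: \<tau>_def algebra_simps)
    qed
    also have "\<dots> = ennreal ((1 + b * d * c powr a * \<tau>) powr (- 1 / d))"
      using TDL_exponent_nonneg[OF adm s] c
      by (intro nn_integral_exp_gamma_laplace[OF M W bdc d laplace]) (simp add: \<tau>_def)
    also have "b * d * c powr a * \<tau> = sgn a * b * d * ((1 - c * s) powr a - (1 - c) powr a)"
      using c by (simp add: \<tau>_def)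
    finally show ?thesis using pgf_nonneg[OF s] by simp
  qed
qed

theorem mainTheorem8:
  fixes a b c d :: real
  assumes adm: "TDL_admissible a b c d"
  shows
   "(\<forall>(M :: 'a measure) (V :: 'a \<Rightarrow> real) (X :: 'a \<Rightarrow> nat) (K :: real \<Rightarrow> nat measure).
       prob_space M \<and> V \<in> borel_measurable M \<and> X \<in> measurable M (count_space UNIV) \<and>
       (\<forall>t\<ge>0. (\<integral>\<omega>. exp (- t * V \<omega>) \<partial>M) = (1 + b * d * t) powr (- 1 / d)) \<and>
       (\<forall>v>0. TDS_law a v c (K v)) \<and>
       cond_law M V borel X (count_space UNIV) K
       \<longrightarrow> TDL_law a b c d (distr M (count_space UNIV) X))
    \<and>
    (0 < c \<longrightarrow>
     (\<forall>(M :: 'b measure) (W :: 'b \<Rightarrow> real) (Y :: 'b \<Rightarrow> real) (X' :: 'b \<Rightarrow> nat)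
        (K1 :: real \<Rightarrow> real measure) (K2 :: real \<times> real \<Rightarrow> nat measure).
       prob_space M \<and> W \<in> borel_measurable M \<and> Y \<in> borel_measurable M \<and>
       X' \<in> measurable M (count_space UNIV) \<and>
       (\<forall>t\<ge>0. (\<integral>\<omega>. exp (- t * W \<omega>) \<partial>M) = (1 + b * d * c powr a * t) powr (- 1 / d)) \<and>
       (\<forall>w>0. TPS_law a w (1 / c - 1) (K1 w)) \<and>
       cond_law M W borel Y borel K1 \<and>
       (\<forall>w y. y \<ge> 0 \<longrightarrow> K2 (w, y) = poisson_law y) \<and>
       cond_law M (\<lambda>\<omega>. (W \<omega>, Y \<omega>)) (borel \<Otimes>\<^sub>M borel) X' (count_space UNIV) K2
       \<longrightarrow> TDL_law a b c d (distr M (count_space UNIV) X')))"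
proof (intro conjI impI allI)
  fix M :: "'a measure" and V X K
  assume "prob_space M \<and> V \<in> borel_measurable M \<and> X \<in> measurable M (count_space UNIV) \<and>
       (\<forall>t\<ge>0. (\<integral>\<omega>. exp (- t * V \<omega>) \<partial>M) = (1 + b * d * t) powr (- 1 / d)) \<and>
       (\<forall>v>0. TDS_law a v c (K v)) \<and> cond_law M V borel X (count_space UNIV) K"
  then show "TDL_law a b c d (distr M (count_space UNIV) X)"
    using TDL_law_gamma_mixture_TDS[OF adm] by blast
next
  fix M :: "'b measure" and W Y X' K1 K2
  assume "0 < c" and "prob_space M \<and> W \<in> borel_measurable M \<and> Y \<in> borel_measurable M \<and>
       X' \<in> measurable M (count_space UNIV) \<and>
       (\<forall>t\<ge>0. (\<integral>\<omega>. exp (- t * W \<omega>) \<partial>M) = (1 + b * d * c powr a * t) powr (- 1 / d)) \<and>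
       (\<forall>w>0. TPS_law a w (1 / c - 1) (K1 w)) \<and> cond_law M W borel Y borel K1 \<and>
       (\<forall>w y. y \<ge> 0 \<longrightarrow> K2 (w, y) = poisson_law y) \<and>
       cond_law M (\<lambda>\<omega>. (W \<omega>, Y \<omega>)) (borel \<Otimes>\<^sub>M borel) X' (count_space UNIV) K2"
  then show "TDL_law a b c d (distr M (count_space UNIV) X')"
    using TDL_law_gamma_mixture_TPS_Poisson[OF adm] by blast
qed

end
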